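(* Let $\mathcal H$ be a real Hilbert space, let $\varepsilon\in\left]0,1/2\right[$, let $m\geq 2$ be an integer, let $x_0\in\mathcal H$, and define $$\phi\colon\left]0,1\right[^m\to\left]0,1\right[\colon(\alpha_1,\ldots,\alpha_m)\mapsto\dfrac{1}{1+\dfrac{1}{\sum_{i=1}^m\dfrac{\alpha_i}{1-\alpha_i}}}.$$ For every $i\in\{1,\ldots,m\}$ and every $n\in\mathbb N$, let $\alpha_{i,n}\in\left]0,1\right[$, let $T_{i,n}\colon\mathcal H\to\mathcal H$ be $\alpha_{i,n}$-averaged, and let $e_{i,n}\in\mathcal H$. For every $n\in\mathbb N$, let $\lambda_n\in\left]0,(1-\varepsilon)(1+\varepsilon\phi(\alpha_{1,n},\ldots,\alpha_{m,n}))/\phi(\alpha_{1,n},\ldots,\alpha_{m,n})\right]$ and set $$x_{n+1}=x_n+\lambda_n\Big(T_{1,n}\Big(T_{2,n}\big(\cdots T_{m-1,n}(T_{m,n}x_n+e_{m,n})+e_{m-1,n}\cdots\big)+e_{2,n}\Big)+e_{1,n}-x_n\Big).$$ Suppose that $S=\bigcap_{n\in\mathbb N}\mathrm{Fix}(T_{1,n}\cdots T_{m,n})\neq\varnothing$ and that $\sum_{n\in\mathbb N}\lambda_n\|e_{i,n}\|<+\infty$ for every $i\in\{1,\ldots,m\}$. For every $i\in\{1,\ldots,m\}$ and $n\in\mathbb N$, define $T_{i+,n}=T_{i+1,n}\cdots T_{m,n}$ if $i\neq m$ and $T_{m+,n}=\mathrm{Id}$. Then: (i) $\sum_{n\in\mathbb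 N}\lambda_n\big(1/\phi(\alpha_{1,n},\ldots,\alpha_{m,n})-\lambda_n\big)\|T_{1,n}\cdots T_{m,n}x_n-x_n\|^2<+\infty$. (ii) For every $x\in S$, $\max_{1\leq i\leq m}\sum_{n\in\mathbb N}\dfrac{\lambda_n(1-\alpha_{i,n})}{\alpha_{i,n}}\big\|(\mathrm{Id}-T_{i,n})T_{i+,n}x_{n}-(\mathrm{Id}-T_{i,n})T_{i+,n}x\big\|^2<+\infty$. (iii) $(x_n)_{n\in\mathbb N}$ converges weakly to a point in $S$ if and only if every weak sequential cluster point of $(x_n)_{n\in\mathbb N}$ is in $S$. In this case, the convergence is strong if $\mathrm{int}\,S\neq\varnothing$. (iv) $(x_n)_{n\in\mathbb N}$ converges strongly to a point in $S$ if and only if $\liminf_{n\to\infty} d_S(x_n)=0$.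
   Context: An operator $T\colon\mathcal H\to\mathcal H$ is nonexpansive if it is 1-Lipschitz; for $\alpha\in\left]0,1\right[$, a nonexpansive $T$ is $\alpha$-averaged if there exists a nonexpansive $R\colon\mathcal H\to\mathcal H$ with $T=(1-\alpha)\mathrm{Id}+\alpha R$. $\mathrm{Fix}$ denotes the fixed point set, $d_S$ the distance function to $S$, $\mathrm{int}\,S$ the interior of $S$. *)

theory Defs
  imports "HOL-Analysis.Analysis"
begin

definition nonexpansive :: "('a::real_normed_vector \<Rightarrow> 'a) \<Rightarrow> bool" where
  "nonexpansive T \<longleftrightarrow> (\<forall>x y. norm (T x - T y) \<le> norm (x - y))"

definition averaged :: "real \<Rightarrow> ('a::real_normed_vector \<Rightarrow> 'a) \<Rightarrow> bool" where
  "averaged \<alpha> T \<longleftrightarrow> 0 < \<alpha> \<and> \<alpha> < 1 \<and> nonexpansive T \<and>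
     (\<exists>R. nonexpansive R \<and> T = (\<lambda>x. (1 - \<alpha>) *\<^sub>R x + \<alpha> *\<^sub>R R x))"

definition Fix :: "('a \<Rightarrow> 'a) \<Rightarrow> 'a set" where
  "Fix T = {x. T x = x}"

definition phi :: "nat \<Rightarrow> (nat \<Rightarrow> real) \<Rightarrow> real" where
  "phi m \<alpha> = 1 / (1 + 1 / (\<Sum>i=1..m. \<alpha> i / (1 - \<alpha> i)))"

text \<open>comp_range T n i j = T_{i,n} o T_{i+1,n} o ... o T_{j,n}  (identity if i > j)\<close>
definition comp_range :: "(nat \<Rightarrow> nat \<Rightarrow> 'a \<Rightarrow> 'a) \<Rightarrow> nat \<Rightarrow> nat \<Rightarrow> nat \<Rightarrow> 'a \<Rightarrow> 'a" where
  "comp_range T n i j = foldr (\<lambda>k f. T k n \<circ> f) [i..<Suc j] id"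

text \<open>perturbed composition:
  y |-> T_{i,n}( T_{i+1,n}( ... T_{j,n} y + e_{j,n} ...) + e_{i+1,n}) + e_{i,n}\<close>
definition pert_comp :: "(nat \<Rightarrow> nat \<Rightarrow> 'a \<Rightarrow> 'a::real_vector) \<Rightarrow> (nat \<Rightarrow> nat \<Rightarrow> 'a)
    \<Rightarrow> nat \<Rightarrow> nat \<Rightarrow> nat \<Rightarrow> 'a \<Rightarrow> 'a" where
  "pert_comp T e n i j = foldr (\<lambda>k g. (\<lambda>y. T k n (g y) + e k n)) [i..<Suc j] id"

definition weakly_conv :: "(nat \<Rightarrow> 'a::real_inner) \<Rightarrow> 'a \<Rightarrow> bool" where
  "weakly_conv x z \<longleftrightarrow> (\<forall>y. ((\<lambda>n. inner (x n) y) \<longlongrightarrow> inner z y) sequentially)"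

definition weak_seq_cluster :: "(nat \<Rightarrow> 'a::real_inner) \<Rightarrow> 'a \<Rightarrow> bool" where
  "weak_seq_cluster x z \<longleftrightarrow> (\<exists>r. strict_mono r \<and> weakly_conv (x \<circ> r) z)"

end

theory Submission
  imports Defs "HOL-Library.Diagonal_Subsequence"
begin

text \<open>Fix \<open>z \<in> S\<close>. Applying the inequality of an \<open>\<alpha>\<close>-averaged operator along the composition
  \<open>T\<^sub>1 \<circ> \<dots> \<circ> T\<^sub>m\<close> and telescoping gives
  \<open>\<parallel>T x - z\<parallel>\<^sup>2 \<le> \<parallel>x - z\<parallel>\<^sup>2 - \<Sum>\<^sub>i (1 - \<alpha>\<^sub>i)/\<alpha>\<^sub>i \<parallel>r\<^sub>i\<parallel>\<^sup>2\<close>, where the residual differences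
  \<open>r\<^sub>i\<close> of (ii) sum to \<open>x - T x\<close>; a weighted Cauchy--Schwarz inequality then bounds
  \<open>\<parallel>T x - x\<parallel>\<^sup>2\<close> by \<open>(1/\<phi> - 1) \<Sum>\<^sub>i (1 - \<alpha>\<^sub>i)/\<alpha>\<^sub>i \<parallel>r\<^sub>i\<parallel>\<^sup>2\<close>. With the bound on \<open>\<lambda>\<^sub>n\<close>, a relaxed step
  therefore decreases \<open>\<parallel>x\<^sub>n - z\<parallel>\<^sup>2\<close> by a multiple of the terms of (i) and (ii), while the errors
  add a summable amount. So \<open>(x\<^sub>n)\<close> is quasi-Fej\'er monotone with respect to \<open>S\<close> and (i), (ii)
  follow by telescoping. Parts (iii) and (iv) hold for every quasi-Fej\'er sequence: bounded
  sequences have weakly convergent subsequences and Opial's argument identifies the weak limit;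
  a ball inside \<open>S\<close> makes the steps summable; and \<open>d\<^sub>S(x\<^sub>n)\<close> is itself quasi-Fej\'er.\<close>

lemma norm_add_square:
  "(norm (a + b :: 'a::real_inner))\<^sup>2 = (norm a)\<^sup>2 + 2 * inner a b + (norm b)\<^sup>2"
  by (simp add: power2_norm_eq_inner inner_add_left inner_add_right inner_commute)

lemma norm_diff_square:
  "(norm (a - b :: 'a::real_inner))\<^sup>2 = (norm a)\<^sup>2 - 2 * inner a b + (norm b)\<^sup>2"
  by (simp add: power2_norm_eq_inner inner_diff_left inner_diff_right inner_commute)

lemma norm_scaleR_square: "(norm (t *\<^sub>R a :: 'a::real_normed_vector))\<^sup>2 = t\<^sup>2 * (norm a)\<^sup>2"
  by (simp add: power_mult_distrib)

lemma square_le_square_add: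
  fixes a b c B C :: real
  assumes "a \<le> b + c" "0 \<le> a" "0 \<le> b" "b \<le> B" "0 \<le> c" "c \<le> C"
  shows "a\<^sup>2 \<le> b\<^sup>2 + c * (2 * B + C)"
proof -
  have "a\<^sup>2 \<le> (b + c)\<^sup>2" using assms by (intro power_mono) auto
  also have "\<dots> = b\<^sup>2 + c * (2 * b + c)" by (simp add: power2_eq_square algebra_simps)
  also have "\<dots> \<le> b\<^sup>2 + c * (2 * B + C)" using assms by (intro add_left_mono mult_left_mono) auto
  finally show ?thesis .
qed

subsection \<open>Quasi-Fej\'er real sequences and Cauchy sequences\<close>

lemma quasi_fejer_real_convergent:
  fixes a c :: "nat \<Rightarrow> real"
  assumes "\<And>n. 0 \<le> a n" "\<And>n. 0 \<le> c n" "summable c" "\<And>n. a (Suc n) \<le> a n + c n"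
  shows "convergent a"
proof -
  define b where "b n = a n - (\<Sum>k<n. c k)" for n
  have "decseq b" unfolding decseq_Suc_iff b_def using assms(4) by (simp add: algebra_simps)
  moreover have "- suminf c \<le> b i" for i
  proof -
    have "(\<Sum>k<i. c k) \<le> suminf c" using sum_le_suminf[OF assms(3)] assms(2) by auto
    then show ?thesis using assms(1)[of i] unfolding b_def by simp
  qed
  ultimately obtain L where "b \<longlonglongrightarrow> L" using decseq_convergent by blast
  then have "(\<lambda>n. b n + (\<Sum>k<n. c k)) \<longlonglongrightarrow> L + suminf c"
    by (intro tendsto_add summable_LIMSEQ assms(3))
  then show ?thesis unfolding b_def convergent_def by auto
qed

lemma quasi_fejer_real_tail_le:
  fixes a c :: "nat \<Rightarrow> real"
  assumes "\<And>n. 0 \<le> c n" "summable c" "\<And>n. a (Suc n) \<le> a n + c n"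
  shows "a (n + k) \<le> a n + (\<Sum>j. c (j + n))"
proof -
  have "a (n + k) \<le> a n + (\<Sum>j<k. c (j + n))"
    by (induction k) (auto intro: order_trans[OF assms(3)] simp: add.commute)
  also have "(\<Sum>j<k. c (j + n)) \<le> (\<Sum>j. c (j + n))"
    using assms(1,2) summable_iff_shift[of c n] by (intro sum_le_suminf) auto
  finally show ?thesis by simp
qed

lemma quasi_fejer_real_le:
  fixes a c :: "nat \<Rightarrow> real"
  assumes "\<And>n. 0 \<le> c n" "summable c" "\<And>n. a (Suc n) \<le> a n + c n"
  shows "a n \<le> a 0 + suminf c"
  using quasi_fejer_real_tail_le[OF assms, of 0 n] by simp

lemma summable_quasi_fejer_decrement:
  fixes a b c :: "nat \<Rightarrow> real"
  assumes "\<And>n. 0 \<le> a n" "\<And>n. 0 \<le> b n" "\<And>n. 0 \<le> c n" "summable c"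
    and step: "\<And>n. a (Suc n) \<le> a n - b n + c n"
  shows "summable b"
proof (rule summableI_nonneg_bounded[OF assms(2)])
  fix n
  have "(\<Sum>i<n. b i) \<le> a 0 - a n + (\<Sum>i<n. c i)"
  proof (induction n)
    case (Suc n)
    then show ?case using step[of n] by simp
  qed simp
  also have "\<dots> \<le> a 0 + suminf c"
    using assms(1)[of n] sum_le_suminf[OF assms(4), of "{..<n}"] assms(3) by auto
  finally show "(\<Sum>i<n. b i) \<le> a 0 + suminf c" .
qed

lemma Cauchy_if_dist_le_null:
  fixes w :: "nat \<Rightarrow> 'a::metric_space"
  assumes dist: "\<And>m n. dist (w m) (w n) \<le> f m + f n" and f: "f \<longlonglongrightarrow> 0"
  shows "Cauchy w"
proof (rule metric_CauchyI)
  fix r :: real assume "0 < r"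
  then obtain N where N: "\<And>n. n \<ge> N \<Longrightarrow> \<bar>f n\<bar> < r / 2"
    using f unfolding LIMSEQ_iff by (metis half_gt_zero real_norm_def diff_zero)
  have "dist (w m) (w n) < r" if "m \<ge> N" "n \<ge> N" for m n
    using dist[of m n] N[OF that(1)] N[OF that(2)] by linarith
  then show "\<exists>N. \<forall>m\<ge>N. \<forall>n\<ge>N. dist (w m) (w n) < r" by blast
qed

lemma suminf_tail_tendsto_zero:
  fixes c :: "nat \<Rightarrow> 'a::real_normed_vector"
  assumes "summable c"
  shows "(\<lambda>n. \<Sum>j. c (j + n)) \<longlonglongrightarrow> 0"
proof -
  have "(\<lambda>n. suminf c - (\<Sum>j<n. c j)) \<longlonglongrightarrow> suminf c - suminf c"
    using assms by (intro tendsto_diff tendsto_const summable_LIMSEQ)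
  then show ?thesis using suminf_minus_initial_segment[OF assms] by simp
qed

lemma Cauchy_if_later_dist_le_null:
  fixes w :: "nat \<Rightarrow> 'a::metric_space"
  assumes le: "\<And>m n. n \<le> m \<Longrightarrow> dist (w m) (w n) \<le> f n" and nonneg: "\<And>n. 0 \<le> f n"
    and f: "f \<longlonglongrightarrow> 0"
  shows "Cauchy w"
proof (rule Cauchy_if_dist_le_null[OF _ f])
  fix m n
  show "dist (w m) (w n) \<le> f m + f n"
    using le[of m n] le[of n m] nonneg[of m] nonneg[of n] by (cases "n \<le> m") (auto simp: dist_commute)
qed

lemma Cauchy_if_summable_dist:
  fixes x :: "nat \<Rightarrow> 'a::metric_space"
  assumes sd: "summable (\<lambda>n. dist (x (Suc n)) (x n))"
  shows "Cauchy x"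
proof (rule Cauchy_if_later_dist_le_null)
  fix m n :: nat assume "n \<le> m"
  have "dist (x (Suc k)) (x n) \<le> dist (x k) (x n) + dist (x (Suc k)) (x k)" for k
    using dist_triangle[of "x (Suc k)" "x n" "x k"] by (simp add: dist_commute)
  then have "dist (x (n + (m - n))) (x n) \<le> dist (x n) (x n) + (\<Sum>j. dist (x (Suc (j + n))) (x (j + n)))"
    by (intro quasi_fejer_real_tail_le[OF _ sd]) auto
  then show "dist (x m) (x n) \<le> (\<Sum>j. dist (x (Suc (j + n))) (x (j + n)))"
    using \<open>n \<le> m\<close> by simp
next
  show "0 \<le> (\<Sum>j. dist (x (Suc (j + n))) (x (j + n)))" for n
    using sd summable_iff_shift[of "\<lambda>n. dist (x (Suc n)) (x n)" n] by (intro suminf_nonneg) auto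
  show "(\<lambda>n. \<Sum>j. dist (x (Suc (j + n))) (x (j + n))) \<longlonglongrightarrow> 0"
    using suminf_tail_tendsto_zero[OF sd] by simp
qed

subsection \<open>Weak sequential compactness\<close>

lemma quadratic_nonneg_imp_zero:
  fixes D N :: real
  assumes N: "0 \<le> N" and nonneg: "\<And>t. 0 \<le> t * D + t\<^sup>2 * N / 2"
  shows "D = 0"
proof (rule ccontr)
  assume D: "D \<noteq> 0"
  define t where "t = - D / (N + 1)"
  have "t * D + t\<^sup>2 * N / 2 = D\<^sup>2 * (- N - 2) / (2 * (N + 1)\<^sup>2)"
    using N unfolding t_def by (simp add: divide_simps power2_eq_square) (simp add: algebra_simps)
  also have "\<dots> < 0" using D N by (intro divide_neg_pos mult_pos_neg) auto
  finally show False using nonneg[of t] by simp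
qed

text \<open>The energy \<open>\<parallel>w\<parallel>\<^sup>2/2 - g w\<close> is quadratic, so the parallelogram law bounds the distance of
  two almost-minimisers by their excess energy.\<close>
lemma almost_minimizing_Cauchy:
  fixes V :: "'a::real_inner set" and g :: "'a \<Rightarrow> real"
  assumes sub: "subspace V"
    and gadd: "\<And>a b. a \<in> V \<Longrightarrow> b \<in> V \<Longrightarrow> g (a + b) = g a + g b"
    and gscale: "\<And>a t. a \<in> V \<Longrightarrow> g (t *\<^sub>R a) = t * g a"
    and min: "\<And>u. u \<in> V \<Longrightarrow> \<mu> \<le> (norm u)\<^sup>2 / 2 - g u"
    and wV: "\<And>k. w k \<in> V" and wJ: "\<And>k. (norm (w k))\<^sup>2 / 2 - g (w k) < \<mu> + inverse (real (Suc k))"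
  shows "Cauchy w"
proof (rule Cauchy_if_dist_le_null)
  define J where "J u = (norm u)\<^sup>2 / 2 - g u" for u
  have para: "(norm (a - b))\<^sup>2 \<le> 4 * (J a + J b - 2 * \<mu>)" if "a \<in> V" "b \<in> V" for a b
  proof -
    define h where "h = (1/2) *\<^sub>R (a + b)"
    have hV: "h \<in> V" unfolding h_def using sub that by (intro subspace_mul subspace_add)
    have gh: "g h = (g a + g b) / 2" unfolding h_def using gscale gadd that sub
      by (simp add: subspace_add)
    have "(norm a)\<^sup>2 + (norm b)\<^sup>2 = 2 * (norm h)\<^sup>2 + (norm (a - b))\<^sup>2 / 2"
      unfolding h_def norm_scaleR_square norm_add_square norm_diff_square
      by (simp add: power2_eq_square field_simps)
    then have "J a + J b - 2 * J h = (norm (a - b))\<^sup>2 / 4"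
      unfolding J_def gh by (simp add: field_simps)
    then show ?thesis using min[OF hV] unfolding J_def by simp
  qed
  fix k l
  have "(dist (w k) (w l))\<^sup>2 \<le> 4 * (inverse (real (Suc k)) + inverse (real (Suc l)))"
    using para[OF wV wV, of k l] wJ[of k] wJ[of l] unfolding J_def by (simp add: dist_norm)
  also have "\<dots> \<le> (2 * sqrt (inverse (real (Suc k))) + 2 * sqrt (inverse (real (Suc l))))\<^sup>2"
    by (simp add: power2_sum power_mult_distrib)
  finally show "dist (w k) (w l) \<le> 2 * sqrt (inverse (real (Suc k))) + 2 * sqrt (inverse (real (Suc l)))"
    by (rule power2_le_imp_le) simp
next
  show "(\<lambda>k. 2 * sqrt (inverse (real (Suc k)))) \<longlonglongrightarrow> 0"
    using tendsto_mult_left[OF tendsto_real_sqrt[OF LIMSEQ_inverse_real_of_nat], of 2] by simp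
qed

text \<open>First-order condition at the limit: the energy cannot decrease in the direction \<open>t v\<close>.\<close>
lemma inner_eq_at_almost_minimizing_limit:
  fixes V :: "'a::real_inner set" and g :: "'a \<Rightarrow> real"
  assumes sub: "subspace V"
    and gadd: "\<And>a b. a \<in> V \<Longrightarrow> b \<in> V \<Longrightarrow> g (a + b) = g a + g b"
    and gscale: "\<And>a t. a \<in> V \<Longrightarrow> g (t *\<^sub>R a) = t * g a"
    and min: "\<And>u. u \<in> V \<Longrightarrow> \<mu> \<le> (norm u)\<^sup>2 / 2 - g u"
    and wV: "\<And>k. w k \<in> V" and wJ: "\<And>k. (norm (w k))\<^sup>2 / 2 - g (w k) < \<mu> + inverse (real (Suc k))"
    and wz: "w \<longlonglongrightarrow> z" and vV: "v \<in> V"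
  shows "inner z v = g v"
proof -
  have "inner z v - g v = 0"
  proof (rule quadratic_nonneg_imp_zero[where N="(norm v)\<^sup>2"])
    fix t
    have less: "- inverse (real (Suc k)) < t * (inner (w k) v - g v) + t\<^sup>2 * (norm v)\<^sup>2 / 2" for k
    proof -
      have "\<mu> \<le> (norm (w k + t *\<^sub>R v))\<^sup>2 / 2 - g (w k + t *\<^sub>R v)"
        using sub wV vV by (intro min subspace_add subspace_mul)
      also have "\<dots> = (norm (w k))\<^sup>2 / 2 - g (w k) + t * (inner (w k) v - g v) + t\<^sup>2 * (norm v)\<^sup>2 / 2"
        unfolding norm_add_square norm_scaleR_square using gadd[OF wV, of "t *\<^sub>R v" k] gscale[OF vV]
          sub vV by (simp add: subspace_mul algebra_simps)
      finally show ?thesis using wJ[of k] by simp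
    qed
    have lim0: "(\<lambda>k. - inverse (real (Suc k))) \<longlonglongrightarrow> 0"
      using tendsto_minus[OF LIMSEQ_inverse_real_of_nat] by simp
    have lim: "(\<lambda>k. t * (inner (w k) v - g v) + t\<^sup>2 * (norm v)\<^sup>2 / 2)
        \<longlonglongrightarrow> t * (inner z v - g v) + t\<^sup>2 * (norm v)\<^sup>2 / 2"
      by (intro tendsto_intros wz)
    show "0 \<le> t * (inner z v - g v) + t\<^sup>2 * (norm v)\<^sup>2 / 2"
      using LIMSEQ_le[OF lim0 lim] less less_imp_le by blast
  qed simp
  then show ?thesis by simp
qed

lemma riesz_representation_on_subspace:
  fixes V :: "'a::{real_inner,complete_space} set" and g :: "'a \<Rightarrow> real"
  assumes sub: "subspace V"
    and gadd: "\<And>a b. a \<in> V \<Longrightarrow> b \<in> V \<Longrightarrow> g (a + b) = g a + g b"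
    and gscale: "\<And>a t. a \<in> V \<Longrightarrow> g (t *\<^sub>R a) = t * g a"
    and gbd: "\<And>a. a \<in> V \<Longrightarrow> \<bar>g a\<bar> \<le> C * norm a"
  shows "\<exists>z\<in>closure V. \<forall>v\<in>V. inner z v = g v"
proof -
  define J where "J u = (norm u)\<^sup>2 / 2 - g u" for u
  have "- (C\<^sup>2) / 2 \<le> J u" if "u \<in> V" for u
  proof -
    have "g u \<le> C * norm u" using gbd[OF that] by linarith
    moreover have "0 \<le> (norm u - C)\<^sup>2" by simp
    ultimately show ?thesis unfolding J_def by (simp add: power2_eq_square algebra_simps)
  qed
  then have bdd: "bdd_below (J ` V)" by (intro bdd_belowI[where m="- (C\<^sup>2) / 2"]) auto
  have min: "Inf (J ` V) \<le> J u" if "u \<in> V" for u using bdd that by (auto intro: cInf_lower)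
  have "\<exists>w\<in>V. J w < Inf (J ` V) + inverse (real (Suc k))" for k
  proof -
    have "Inf (J ` V) < Inf (J ` V) + inverse (real (Suc k))" by simp
    then show ?thesis by (subst (asm) cInf_less_iff) (use bdd subspace_0[OF sub] in auto)
  qed
  then obtain w where wV: "\<And>k. w k \<in> V" and wJ: "\<And>k. J (w k) < Inf (J ` V) + inverse (real (Suc k))"
    by metis
  have "Cauchy w"
    using sub gadd gscale min wV wJ unfolding J_def by (rule almost_minimizing_Cauchy)
  then obtain z where wz: "w \<longlonglongrightarrow> z" using Cauchy_convergent_iff convergent_def by blast
  have "inner z v = g v" if "v \<in> V" for v
    using sub gadd gscale min wV wJ wz that unfolding J_def by (rule inner_eq_at_almost_minimizing_limit)
  moreover have "z \<in> closure V" using wz wV closure_sequential by blast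
  ultimately show ?thesis by blast
qed

lemma projection_onto_closure_subspace:
  fixes V :: "'a::{real_inner,complete_space} set"
  assumes "subspace V"
  shows "\<exists>p\<in>closure V. \<forall>v\<in>V. inner p v = inner u v"
  by (rule riesz_representation_on_subspace[OF assms, where C="norm u"])
    (auto simp: inner_add_right Cauchy_Schwarz_ineq2)

lemma bounded_diagonal_inner_convergent:
  fixes x :: "nat \<Rightarrow> 'a::real_inner"
  assumes bd: "\<And>n. norm (x n) \<le> C"
  shows "\<exists>d. strict_mono d \<and> (\<forall>k. convergent (\<lambda>n. inner (x (d n)) (x k)))"
proof -
  let ?P = "\<lambda>k s. convergent (\<lambda>n. inner (x (s n)) (x k))"
  interpret subseqs ?P
  proof (unfold subseqs_def, intro allI impI)
    fix k :: nat and s :: "nat \<Rightarrow> nat"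
    have "inner (x (s n)) (x k) \<in> {- C * norm (x k)..C * norm (x k)}" for n
      using Cauchy_Schwarz_ineq2[of "x (s n)" "x k"] bd[of "s n"]
        mult_right_mono[OF bd[of "s n"] norm_ge_zero[of "x k"]] by auto
    then obtain l s' where "strict_mono s'" "((\<lambda>n. inner (x (s n)) (x k)) \<circ> s') \<longlonglongrightarrow> l"
      using compact_Icc compact_imp_seq_compact seq_compactE by metis
    then show "\<exists>r'. strict_mono r' \<and> ?P k (s \<circ> r')"
      by (auto simp: comp_def convergent_def)
  qed
  have "?P k diagseq" for k
  proof -
    have "?P k (diagseq \<circ> ((+) (Suc k)))"
      by (rule diagseq_holds) (auto simp: comp_def dest: convergent_subseq_convergent[unfolded comp_def])
    then obtain L where "(\<lambda>n. inner (x (diagseq (n + Suc k))) (x k)) \<longlonglongrightarrow> L"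
      by (auto simp: add.commute convergent_def)
    then have "(\<lambda>n. inner (x (diagseq n)) (x k)) \<longlonglongrightarrow> L" by (rule LIMSEQ_offset)
    then show ?thesis by (auto simp: convergent_def)
  qed
  then show ?thesis using subseq_diagseq by blast
qed

lemma subspace_inner_convergent: "subspace {v. convergent (\<lambda>n. inner (y n) v)}"
  unfolding subspace_def convergent_def
  by (auto simp: inner_add_right intro: tendsto_add tendsto_mult_left)

lemma inner_tendsto_on_closure:
  fixes y :: "nat \<Rightarrow> 'a::real_inner"
  assumes bd: "\<And>n. norm (y n) \<le> C"
    and lim: "\<And>v. v \<in> V \<Longrightarrow> (\<lambda>n. inner (y n) v) \<longlonglongrightarrow> inner z v"
    and p: "p \<in> closure V"
  shows "(\<lambda>n. inner (y n) p) \<longlonglongrightarrow> inner z p"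
  unfolding LIMSEQ_iff
proof (intro allI impI)
  fix r :: real assume r: "0 < r"
  define K where "K = C + norm z + 1"
  have K: "0 < K" unfolding K_def using bd[of 0] by (smt (verit) norm_ge_zero)
  obtain v where vV: "v \<in> V" and pv: "norm (p - v) < r / (2 * K)"
    using p r K unfolding closure_approachable dist_norm
    by (metis divide_pos_pos mult_pos_pos norm_minus_commute zero_less_numeral)
  obtain N where N: "\<And>n. n \<ge> N \<Longrightarrow> \<bar>inner (y n) v - inner z v\<bar> < r / 2"
    using lim[OF vV] r unfolding LIMSEQ_iff by (metis half_gt_zero real_norm_def)
  have "\<bar>inner (y n) p - inner z p\<bar> < r" if "n \<ge> N" for n
  proof -
    have "\<bar>inner (y n - z) (p - v)\<bar> \<le> norm (y n - z) * norm (p - v)" by (rule Cauchy_Schwarz_ineq2)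
    also have "\<dots> \<le> K * (r / (2 * K))"
      using bd[of n] norm_triangle_ineq4[of "y n" z] pv K unfolding K_def
      by (intro mult_mono) auto
    finally have "\<bar>inner (y n - z) (p - v)\<bar> \<le> r / 2" using K by simp
    moreover have "inner (y n) p - inner z p = inner (y n - z) (p - v) + (inner (y n) v - inner z v)"
      by (simp add: inner_diff_left inner_diff_right)
    ultimately show ?thesis using N[OF that] by linarith
  qed
  then show "\<exists>N. \<forall>n\<ge>N. norm (inner (y n) p - inner z p) < r" by auto
qed

text \<open>Convergence of \<open>inner (y n) u\<close> reduces to convergence of \<open>inner (y n) p\<close>, where \<open>p\<close> is
  the orthogonal projection of \<open>u\<close> onto \<open>closure V\<close>.\<close>
lemma weakly_conv_if_tendsto_on_subspace:
  fixes y :: "nat \<Rightarrow> 'a::{real_inner,complete_space}"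
  assumes sub: "subspace V" and yV: "\<And>n. y n \<in> V" and bd: "\<And>n. norm (y n) \<le> C"
    and zV: "z \<in> closure V" and lim: "\<And>v. v \<in> V \<Longrightarrow> (\<lambda>n. inner (y n) v) \<longlonglongrightarrow> inner z v"
  shows "weakly_conv y z"
  unfolding weakly_conv_def
proof
  fix u
  obtain p where pV: "p \<in> closure V" and pu: "\<And>v. v \<in> V \<Longrightarrow> inner p v = inner u v"
    using projection_onto_closure_subspace[OF sub] by blast
  have "closure V \<subseteq> {w. inner w (u - p) = 0}"
    by (rule closure_minimal) (auto simp: inner_diff_right intro!: closed_Collect_eq continuous_intros,
        metis pu inner_commute)
  then have "inner z u = inner z p" using zV by (auto simp: inner_diff_right)
  moreover have "inner (y n) u = inner (y n) p" for n
    using pu[OF yV] by (simp add: inner_commute)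
  moreover have "(\<lambda>n. inner (y n) p) \<longlonglongrightarrow> inner z p"
    using bd lim pV by (rule inner_tendsto_on_closure)
  ultimately show "(\<lambda>n. inner (y n) u) \<longlonglongrightarrow> inner z u" by simp
qed

text \<open>After a diagonal extraction the functionals \<open>inner (x (d n))\<close> converge on the span of the
  sequence, and their limit is represented by a vector of its closure.\<close>
lemma bounded_weakly_convergent_subseq:
  fixes x :: "nat \<Rightarrow> 'a::{real_inner,complete_space}"
  assumes bd: "\<And>n. norm (x n) \<le> C"
  shows "\<exists>r z. strict_mono r \<and> weakly_conv (x \<circ> r) z"
proof -
  obtain d where d: "strict_mono d" and cnv: "\<And>k. convergent (\<lambda>n. inner (x (d n)) (x k))"
    using bounded_diagonal_inner_convergent[of x, OF bd] by blast
  define y where "y = x \<circ> d"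
  define V where "V = span (range x)"
  define g where "g v = lim (\<lambda>n. inner (y n) v)" for v
  have sub: "subspace V" unfolding V_def by simp
  have yV: "y n \<in> V" for n unfolding V_def y_def by (simp add: span_base)
  have ybd: "norm (y n) \<le> C" for n unfolding y_def using bd by simp
  have "range x \<subseteq> {v. convergent (\<lambda>n. inner (y n) v)}" using cnv unfolding y_def by auto
  then have "V \<subseteq> {v. convergent (\<lambda>n. inner (y n) v)}"
    unfolding V_def using subspace_inner_convergent by (rule span_minimal)
  then have gl: "(\<lambda>n. inner (y n) v) \<longlonglongrightarrow> g v" if "v \<in> V" for v
    unfolding g_def using that convergent_LIMSEQ_iff by blast
  have "\<exists>z\<in>closure V. \<forall>v\<in>V. inner z v = g v"
  proof (rule riesz_representation_on_subspace[OF sub])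
    fix a b assume ab: "a \<in> V" "b \<in> V"
    have "(\<lambda>n. inner (y n) (a + b)) \<longlonglongrightarrow> g a + g b"
      unfolding inner_add_right by (intro tendsto_add gl ab)
    then show "g (a + b) = g a + g b" using gl[OF subspace_add[OF sub ab]] LIMSEQ_unique by blast
  next
    fix a and t :: real assume a: "a \<in> V"
    have "(\<lambda>n. inner (y n) (t *\<^sub>R a)) \<longlonglongrightarrow> t * g a"
      unfolding inner_scaleR_right by (intro tendsto_mult_left gl a)
    then show "g (t *\<^sub>R a) = t * g a" using gl[OF subspace_mul[OF sub a]] LIMSEQ_unique by blast
  next
    fix a assume a: "a \<in> V"
    have "\<bar>inner (y n) a\<bar> \<le> C * norm a" for n
      using Cauchy_Schwarz_ineq2[of "y n" a] ybd[of n] by (smt (verit) mult_right_mono norm_ge_zero)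
    then show "\<bar>g a\<bar> \<le> C * norm a" by (intro LIMSEQ_le_const2[OF tendsto_rabs[OF gl[OF a]]]) auto
  qed
  then obtain z where zV: "z \<in> closure V" and zg: "\<And>v. v \<in> V \<Longrightarrow> inner z v = g v" by blast
  have "weakly_conv y z"
    using sub yV ybd zV by (rule weakly_conv_if_tendsto_on_subspace) (use gl zg in simp)
  with d show ?thesis unfolding y_def by blast
qed

lemma weakly_conv_if_tendsto: "x \<longlonglongrightarrow> z \<Longrightarrow> weakly_conv x z"
  unfolding weakly_conv_def by (auto intro: tendsto_intros)

lemma weakly_conv_subseq:
  assumes "weakly_conv x z" "strict_mono r"
  shows "weakly_conv (x \<circ> r) z"
  unfolding weakly_conv_def
proof
  fix y
  have "(\<lambda>n. inner (x n) y) \<longlonglongrightarrow> inner z y" using assms(1) unfolding weakly_conv_def by blast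
  from LIMSEQ_subseq_LIMSEQ[OF this assms(2)] show "(\<lambda>n. inner ((x \<circ> r) n) y) \<longlonglongrightarrow> inner z y"
    by (simp add: comp_def)
qed

lemma weakly_conv_unique:
  assumes "weakly_conv x z" "weakly_conv x w"
  shows "w = z"
proof -
  have "(\<lambda>n. inner (x n) (z - w)) \<longlonglongrightarrow> inner z (z - w)"
    "(\<lambda>n. inner (x n) (z - w)) \<longlonglongrightarrow> inner w (z - w)"
    using assms unfolding weakly_conv_def by blast+
  then have "inner z (z - w) = inner w (z - w)" by (rule LIMSEQ_unique)
  then have "inner (z - w) (z - w) = 0" by (simp add: inner_diff_left)
  then show ?thesis by simp
qed

lemma weak_seq_cluster_eq_weak_limit:
  assumes "weakly_conv x z" "weak_seq_cluster x w"
  shows "w = z"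
  using assms weakly_conv_subseq weakly_conv_unique unfolding weak_seq_cluster_def by blast

text \<open>Opial: \<open>inner (x n) (z\<^sub>2 - z\<^sub>1)\<close> is a combination of \<open>\<parallel>x n - z\<^sub>1\<parallel>\<^sup>2\<close> and
  \<open>\<parallel>x n - z\<^sub>2\<parallel>\<^sup>2\<close>, hence converges, so any two weak cluster points have the same inner
  product with \<open>z\<^sub>2 - z\<^sub>1\<close>.\<close>
lemma weak_seq_cluster_unique_if_dist_convergent:
  fixes x :: "nat \<Rightarrow> 'a::real_inner"
  assumes conv: "\<And>z. z \<in> S \<Longrightarrow> convergent (\<lambda>n. norm (x n - z))"
    and z1: "z1 \<in> S" "weak_seq_cluster x z1" and z2: "z2 \<in> S" "weak_seq_cluster x z2"
  shows "z1 = z2"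
proof -
  obtain L1 L2 where L1: "(\<lambda>n. norm (x n - z1)) \<longlonglongrightarrow> L1" and L2: "(\<lambda>n. norm (x n - z2)) \<longlonglongrightarrow> L2"
    using conv z1 z2 by (meson convergent_def)
  have "inner (x n) (z2 - z1)
      = ((norm (x n - z1))\<^sup>2 - (norm (x n - z2))\<^sup>2 - (norm z1)\<^sup>2 + (norm z2)\<^sup>2) / 2" for n
    unfolding norm_diff_square by (simp add: inner_diff_right inner_commute)
  then have lim: "(\<lambda>n. inner (x n) (z2 - z1)) \<longlonglongrightarrow> (L1\<^sup>2 - L2\<^sup>2 - (norm z1)\<^sup>2 + (norm z2)\<^sup>2) / 2"
    by (simp only:) (intro tendsto_intros L1 L2; simp)
  have limit: "inner w (z2 - z1) = (L1\<^sup>2 - L2\<^sup>2 - (norm z1)\<^sup>2 + (norm z2)\<^sup>2) / 2"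
    if w: "weak_seq_cluster x w" for w
  proof -
    obtain r where r: "strict_mono r" "weakly_conv (x \<circ> r) w"
      using w unfolding weak_seq_cluster_def by blast
    have "(\<lambda>n. inner (x (r n)) (z2 - z1)) \<longlonglongrightarrow> (L1\<^sup>2 - L2\<^sup>2 - (norm z1)\<^sup>2 + (norm z2)\<^sup>2) / 2"
      using LIMSEQ_subseq_LIMSEQ[OF lim r(1)] by (simp add: comp_def)
    moreover have "(\<lambda>n. inner (x (r n)) (z2 - z1)) \<longlonglongrightarrow> inner w (z2 - z1)"
      using r(2) unfolding weakly_conv_def by (simp add: comp_def)
    ultimately show ?thesis using LIMSEQ_unique by metis
  qed
  have "inner z2 (z2 - z1) = inner z1 (z2 - z1)" using limit[OF z1(2)] limit[OF z2(2)] by simp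
  then have "inner (z2 - z1) (z2 - z1) = 0" by (simp add: inner_diff_left)
  then show ?thesis by simp
qed

lemma weakly_conv_if_unique_weak_seq_cluster:
  fixes x :: "nat \<Rightarrow> 'a::{real_inner,complete_space}"
  assumes bd: "\<And>n. norm (x n) \<le> B" and unique: "\<And>w. weak_seq_cluster x w \<Longrightarrow> w = z"
  shows "weakly_conv x z"
  unfolding weakly_conv_def
proof (rule allI, rule ccontr)
  fix u assume "\<not> (\<lambda>n. inner (x n) u) \<longlonglongrightarrow> inner z u"
  then obtain \<delta> where \<delta>: "\<delta> > 0" and far: "\<forall>N. \<exists>n\<ge>N. \<delta> \<le> \<bar>inner (x n) u - inner z u\<bar>"
    unfolding LIMSEQ_iff by (metis not_less real_norm_def)
  then have "infinite {n. \<delta> \<le> \<bar>inner (x n) u - inner z u\<bar>}"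
    unfolding infinite_nat_iff_unbounded_le by simp
  then obtain s :: "nat \<Rightarrow> nat" where s: "strict_mono s"
    and sfar: "\<And>n. \<delta> \<le> \<bar>inner (x (s n)) u - inner z u\<bar>"
    using infinite_enumerate by blast
  obtain r w where r: "strict_mono r" and w: "weakly_conv ((x \<circ> s) \<circ> r) w"
    using bounded_weakly_convergent_subseq[of "x \<circ> s" B] bd by auto
  have "weak_seq_cluster x w"
    unfolding weak_seq_cluster_def using strict_mono_o[OF s r] w by (auto simp: comp_assoc)
  then have "(\<lambda>n. inner (x (s (r n))) u) \<longlonglongrightarrow> inner z u"
    using w unique unfolding weakly_conv_def by (simp add: comp_def)
  then obtain N where "\<bar>inner (x (s (r N))) u - inner z u\<bar> < \<delta>"
    using \<delta> unfolding LIMSEQ_iff by (metis order_refl real_norm_def)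
  then show False using sfar[of "r N"] by simp
qed

subsection \<open>Quasi-Fej\'er monotone sequences\<close>

locale quasi_fejer =
  fixes S :: "'a::{real_inner,complete_space} set" and c :: "nat \<Rightarrow> real" and x :: "nat \<Rightarrow> 'a"
  assumes c_nonneg: "\<And>n. 0 \<le> c n" and c_summable: "summable c"
    and fejer: "\<And>z n. z \<in> S \<Longrightarrow> norm (x (Suc n) - z) \<le> norm (x n - z) + c n"
    and S_nonempty: "S \<noteq> {}"
begin

lemma dist_bounded:
  assumes "z \<in> S" shows "norm (x n - z) \<le> norm (x 0 - z) + suminf c"
  using quasi_fejer_real_le[of c "\<lambda>n. norm (x n - z)", OF c_nonneg c_summable fejer[OF assms]] .

lemma dist_convergent:
  assumes "z \<in> S" shows "convergent (\<lambda>n. norm (x n - z))"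
  using quasi_fejer_real_convergent[of "\<lambda>n. norm (x n - z)" c, OF _ c_nonneg c_summable fejer[OF assms]]
  by simp

lemma norm_bounded: obtains B where "\<And>n. norm (x n) \<le> B"
proof -
  obtain z where z: "z \<in> S" using S_nonempty by blast
  have "norm (x n) \<le> norm z + (norm (x 0 - z) + suminf c)" for n
    using dist_bounded[OF z, of n] norm_triangle_ineq2[of "x n" z] by linarith
  then show ?thesis by (rule that)
qed

lemma weakly_conv_iff_weak_seq_clusters:
  "(\<exists>z\<in>S. weakly_conv x z) \<longleftrightarrow> (\<forall>z. weak_seq_cluster x z \<longrightarrow> z \<in> S)"
proof
  assume "\<exists>z\<in>S. weakly_conv x z"
  then show "\<forall>z. weak_seq_cluster x z \<longrightarrow> z \<in> S" using weak_seq_cluster_eq_weak_limit by blast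
next
  assume clusters: "\<forall>z. weak_seq_cluster x z \<longrightarrow> z \<in> S"
  obtain B where B: "\<And>n. norm (x n) \<le> B" using norm_bounded by blast
  obtain r z where "strict_mono r" "weakly_conv (x \<circ> r) z"
    using bounded_weakly_convergent_subseq[of x B] B by blast
  then have z: "weak_seq_cluster x z" unfolding weak_seq_cluster_def by blast
  have "weakly_conv x z"
    using B clusters z dist_convergent weak_seq_cluster_unique_if_dist_convergent
    by (intro weakly_conv_if_unique_weak_seq_cluster[of x B]) blast+
  then show "\<exists>z\<in>S. weakly_conv x z" using clusters z by blast
qed

lemma c_le_suminf: "c n \<le> suminf c"
  using sum_le_suminf[OF c_summable, of "{n}"] c_nonneg by auto

text \<open>Fej\'er's inequality at the point of the ball opposite to the direction of the step
  \<open>x (Suc n) - x n\<close> bounds the length of that step.\<close>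
lemma step_le_if_cball_subset:
  assumes ball: "cball p \<rho> \<subseteq> S" and \<rho>: "0 < \<rho>"
  defines "M \<equiv> norm (x 0 - p) + suminf c + \<rho>"
  shows "2 * \<rho> * norm (x (Suc n) - x n)
    \<le> (norm (x n - p))\<^sup>2 - (norm (x (Suc n) - p))\<^sup>2 + c n * (2 * M + suminf c)"
proof (cases "x (Suc n) = x n")
  case True
  have "0 \<le> M" unfolding M_def using suminf_nonneg[OF c_summable c_nonneg] \<rho> by simp
  then show ?thesis using True c_nonneg[of n] suminf_nonneg[OF c_summable c_nonneg] by simp
next
  case False
  define \<Delta> where "\<Delta> = x (Suc n) - x n"
  define u where "u = (1 / norm \<Delta>) *\<^sub>R \<Delta>"
  define q where "q = p - \<rho> *\<^sub>R u"
  have u: "norm u = 1" "inner \<Delta> u = norm \<Delta>"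
    using False unfolding u_def \<Delta>_def by (simp_all add: power2_norm_eq_inner[symmetric] power2_eq_square)
  have "q \<in> S" using ball \<rho> u unfolding q_def by (auto simp: dist_norm)
  have "norm (x n - q) \<le> norm (x n - p) + \<rho>"
    using norm_triangle_ineq[of "x n - p" "\<rho> *\<^sub>R u"] u \<rho> unfolding q_def by (simp add: algebra_simps)
  also have "\<dots> \<le> M" using dist_bounded[OF subsetD[OF ball, of p], of n] \<rho> unfolding M_def by simp
  finally have "(norm (x (Suc n) - q))\<^sup>2 \<le> (norm (x n - q))\<^sup>2 + c n * (2 * M + suminf c)"
    using fejer[OF \<open>q \<in> S\<close>, of n] c_nonneg[of n] c_le_suminf[of n]
    by (intro square_le_square_add) auto
  moreover have "(norm (y - q))\<^sup>2 = (norm (y - p))\<^sup>2 + 2 * \<rho> * inner (y - p) u + \<rho>\<^sup>2" for y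
  proof -
    have "y - q = (y - p) + \<rho> *\<^sub>R u" unfolding q_def by simp
    then have "(norm (y - q))\<^sup>2 = (norm ((y - p) + \<rho> *\<^sub>R u))\<^sup>2" by (simp only:)
    then show ?thesis unfolding norm_add_square norm_scaleR_square using u by simp
  qed
  moreover have "inner (x (Suc n) - p) u - inner (x n - p) u = norm \<Delta>"
    using u unfolding \<Delta>_def by (simp add: inner_diff_left)
  ultimately show ?thesis unfolding \<Delta>_def by (simp add: algebra_simps)
qed

lemma tendsto_if_interior_nonempty:
  assumes z: "weakly_conv x z" and int: "interior S \<noteq> {}"
  shows "x \<longlonglongrightarrow> z"
proof -
  obtain p \<rho> where \<rho>: "0 < \<rho>" and ball: "cball p \<rho> \<subseteq> S"
    using int mem_interior_cball by blast
  define M where "M = norm (x 0 - p) + suminf c + \<rho>"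
  have M: "0 \<le> 2 * M + suminf c" unfolding M_def using suminf_nonneg[OF c_summable c_nonneg] \<rho> by simp
  have "summable (\<lambda>n. 2 * \<rho> * norm (x (Suc n) - x n))"
  proof (rule summable_quasi_fejer_decrement[where a="\<lambda>n. (norm (x n - p))\<^sup>2"
        and c="\<lambda>n. c n * (2 * M + suminf c)"])
    fix n
    show "(norm (x (Suc n) - p))\<^sup>2
        \<le> (norm (x n - p))\<^sup>2 - 2 * \<rho> * norm (x (Suc n) - x n) + c n * (2 * M + suminf c)"
      using step_le_if_cball_subset[OF ball \<rho>, of n] unfolding M_def by linarith
    show "0 \<le> 2 * \<rho> * norm (x (Suc n) - x n)" using \<rho> by simp
    show "0 \<le> c n * (2 * M + suminf c)" using c_nonneg[of n] M by simp
  next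
    show "summable (\<lambda>n. c n * (2 * M + suminf c))" using c_summable by (rule summable_mult2)
  qed simp
  then have "summable (\<lambda>n. norm (x (Suc n) - x n))" using \<rho> by (simp add: summable_cmult_iff)
  then have "Cauchy x" unfolding dist_norm[symmetric] by (rule Cauchy_if_summable_dist)
  then obtain q where q: "x \<longlonglongrightarrow> q" unfolding Cauchy_convergent_iff convergent_def by blast
  then have "q = z" using weakly_conv_unique[OF z weakly_conv_if_tendsto] by blast
  then show ?thesis using q by simp
qed

lemma infdist_step_le: "infdist (x (Suc n)) S \<le> infdist (x n) S + c n"
proof -
  have "infdist (x (Suc n)) S - c n \<le> dist (x n) z" if "z \<in> S" for z
    using infdist_le[OF that, of "x (Suc n)"] fejer[OF that, of n] by (simp add: dist_norm)
  then have "infdist (x (Suc n)) S - c n \<le> (INF z\<in>S. dist (x n) z)"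
    using S_nonempty by (intro cINF_greatest) auto
  then show ?thesis unfolding infdist_notempty[OF S_nonempty] by simp
qed

lemma dist_le_infdist:
  assumes "n \<le> m"
  shows "dist (x m) (x n) \<le> 2 * infdist (x n) S + (\<Sum>j. c (j + n))"
proof -
  have "(dist (x m) (x n) - (\<Sum>j. c (j + n))) / 2 \<le> dist (x n) z" if z: "z \<in> S" for z
  proof -
    have "norm (x (n + (m - n)) - z) \<le> norm (x n - z) + (\<Sum>j. c (j + n))"
      using quasi_fejer_real_tail_le[of c "\<lambda>n. norm (x n - z)", OF c_nonneg c_summable fejer[OF z]] .
    then show ?thesis
      using assms dist_triangle2[of "x m" "x n" z] by (simp add: dist_norm)
  qed
  then have "(dist (x m) (x n) - (\<Sum>j. c (j + n))) / 2 \<le> (INF z\<in>S. dist (x n) z)"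
    using S_nonempty by (intro cINF_greatest) auto
  then show ?thesis unfolding infdist_notempty[OF S_nonempty] by simp
qed

lemma Cauchy_if_infdist_tendsto_zero:
  assumes lim: "(\<lambda>n. infdist (x n) S) \<longlonglongrightarrow> 0"
  shows "Cauchy x"
proof (rule Cauchy_if_later_dist_le_null)
  show "0 \<le> 2 * infdist (x n) S + (\<Sum>j. c (j + n))" for n
    using c_nonneg c_summable summable_iff_shift[of c n] infdist_nonneg[of "x n" S]
    by (intro add_nonneg_nonneg suminf_nonneg) auto
  have "(\<lambda>n. 2 * infdist (x n) S + (\<Sum>j. c (j + n))) \<longlonglongrightarrow> 2 * 0 + 0"
    by (intro tendsto_intros lim suminf_tail_tendsto_zero c_summable)
  then show "(\<lambda>n. 2 * infdist (x n) S + (\<Sum>j. c (j + n))) \<longlonglongrightarrow> 0" by simp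
qed (rule dist_le_infdist)

lemma tendsto_iff_liminf_infdist:
  assumes "closed S"
  shows "(\<exists>z\<in>S. x \<longlonglongrightarrow> z) \<longleftrightarrow> liminf (\<lambda>n. ereal (infdist (x n) S)) = 0"
proof
  assume "\<exists>z\<in>S. x \<longlonglongrightarrow> z"
  then obtain z where "z \<in> S" "x \<longlonglongrightarrow> z" by blast
  then have "(\<lambda>n. ereal (infdist (x n) S)) \<longlonglongrightarrow> ereal 0"
    using tendsto_infdist[of x z sequentially S] by (intro tendsto_ereal) simp
  then have "liminf (\<lambda>n. ereal (infdist (x n) S)) = ereal 0"
    by (rule lim_imp_Liminf[OF trivial_limit_sequentially])
  then show "liminf (\<lambda>n. ereal (infdist (x n) S)) = 0" by (simp add: zero_ereal_def)
next
  assume liminf: "liminf (\<lambda>n. ereal (infdist (x n) S)) = 0"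
  obtain L where L: "(\<lambda>n. infdist (x n) S) \<longlonglongrightarrow> L"
    using quasi_fejer_real_convergent[OF infdist_nonneg c_nonneg c_summable infdist_step_le]
    by (auto simp: convergent_def)
  then have "liminf (\<lambda>n. ereal (infdist (x n) S)) = ereal L"
    by (intro lim_imp_Liminf[OF trivial_limit_sequentially] tendsto_ereal)
  then have "L = 0" using liminf by (simp add: zero_ereal_def)
  then have "Cauchy x" using Cauchy_if_infdist_tendsto_zero L by simp
  then obtain p where p: "x \<longlonglongrightarrow> p" unfolding Cauchy_convergent_iff convergent_def by blast
  then have "(\<lambda>n. infdist (x n) S) \<longlonglongrightarrow> infdist p S" by (rule tendsto_infdist)
  then have "infdist p S = 0" using L \<open>L = 0\<close> LIMSEQ_unique by blast
  then show "\<exists>z\<in>S. x \<longlonglongrightarrow> z" using p in_closed_iff_infdist_zero[OF assms S_nonempty] by blast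
qed

end

subsection \<open>Averaged operators and their compositions\<close>

lemma averaged_norm_square_le:
  fixes T :: "'a::real_inner \<Rightarrow> 'a"
  assumes "averaged \<alpha> T"
  shows "(norm (T x - T y))\<^sup>2 \<le> (norm (x - y))\<^sup>2 - (1 - \<alpha>) / \<alpha> * (norm ((x - T x) - (y - T y)))\<^sup>2"
proof -
  obtain R where R: "nonexpansive R" and T: "T = (\<lambda>x. (1 - \<alpha>) *\<^sub>R x + \<alpha> *\<^sub>R R x)"
    and a0: "0 < \<alpha>" using assms unfolding averaged_def by blast
  define u where "u = x - y"
  define v where "v = R x - R y"
  have vu: "norm v \<le> norm u" using R unfolding nonexpansive_def u_def v_def by blast
  have e1: "T x - T y = (1 - \<alpha>) *\<^sub>R u + \<alpha> *\<^sub>R v" unfolding T u_def v_def by (simp add: algebra_simps)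
  have e2: "(x - T x) - (y - T y) = \<alpha> *\<^sub>R (u - v)" unfolding T u_def v_def by (simp add: algebra_simps)
  define U where "U = (norm u)\<^sup>2"
  define V where "V = (norm v)\<^sup>2"
  define I where "I = inner u v"
  have l: "(norm (T x - T y))\<^sup>2 = (1-\<alpha>)\<^sup>2 * U + 2 * ((1-\<alpha>) * \<alpha>) * I + \<alpha>\<^sup>2 * V"
    unfolding e1 norm_add_square norm_scaleR_square U_def V_def I_def by simp
  have r: "(norm ((x - T x) - (y - T y)))\<^sup>2 = \<alpha>\<^sup>2 * (U - 2 * I + V)"
    unfolding e2 norm_scaleR_square norm_diff_square U_def V_def I_def ..
  have VU: "V \<le> U" unfolding U_def V_def using vu by (simp add: power_mono)
  have "(norm (x - y))\<^sup>2 - (1 - \<alpha>) / \<alpha> * (norm ((x - T x) - (y - T y)))\<^sup>2 - (norm (T x - T y))\<^sup>2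
        = \<alpha> * (U - V)"
    unfolding l r u_def[symmetric] U_def[symmetric] using a0
    by (simp add: field_simps power2_eq_square)
  moreover have "0 \<le> \<alpha> * (U - V)" using a0 VU by simp
  ultimately show ?thesis by linarith
qed

lemma comp_range_first: "i \<le> j \<Longrightarrow> comp_range T n i j = T i n \<circ> comp_range T n (Suc i) j"
  unfolding comp_range_def by (simp add: upt_conv_Cons del: upt_Suc)

lemma comp_range_empty: "comp_range T n (Suc j) j = id"
  unfolding comp_range_def by simp

lemma pert_comp_first: "i \<le> j \<Longrightarrow> pert_comp T e n i j y = T i n (pert_comp T e n (Suc i) j y) + e i n"
  unfolding pert_comp_def by (simp add: upt_conv_Cons del: upt_Suc)

lemma pert_comp_empty: "pert_comp T e n (Suc j) j = id"
  unfolding pert_comp_def by simp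

lemma nonexpansive_comp_range:
  assumes "\<And>k. k \<in> {i..m} \<Longrightarrow> nonexpansive (T k n)" and "i \<le> Suc m"
  shows "nonexpansive (comp_range T n i m)"
  using assms
proof (induction "Suc m - i" arbitrary: i)
  case 0 then have "i = Suc m" by simp
  then show ?case by (simp add: comp_range_empty nonexpansive_def)
next
  case (Suc d)
  then have im: "i \<le> m" by simp
  have "nonexpansive (comp_range T n (Suc i) m)" using Suc by simp
  moreover have "nonexpansive (T i n)" using Suc.prems im by simp
  ultimately show ?case unfolding comp_range_first[OF im] nonexpansive_def
    by (metis comp_apply order_trans)
qed

lemma norm_pert_comp_diff_le:
  assumes "\<And>k. k \<in> {i..m} \<Longrightarrow> nonexpansive (T k n)" and "i \<le> Suc m"
  shows "norm (pert_comp T e n i m y - comp_range T n i m y) \<le> (\<Sum>k=i..m. norm (e k n))"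
  using assms
proof (induction "Suc m - i" arbitrary: i)
  case 0 then have "i = Suc m" by simp
  then show ?case by (simp add: pert_comp_empty comp_range_empty)
next
  case (Suc d)
  then have im: "i \<le> m" by simp
  have IH: "norm (pert_comp T e n (Suc i) m y - comp_range T n (Suc i) m y) \<le> (\<Sum>k=Suc i..m. norm (e k n))"
    using Suc by simp
  have ne: "nonexpansive (T i n)" using Suc.prems im by simp
  have "norm (pert_comp T e n i m y - comp_range T n i m y)
      = norm ((T i n (pert_comp T e n (Suc i) m y) - T i n (comp_range T n (Suc i) m y)) + e i n)"
    unfolding pert_comp_first[OF im] comp_range_first[OF im] by (simp add: algebra_simps)
  also have "\<dots> \<le> norm (T i n (pert_comp T e n (Suc i) m y) - T i n (comp_range T n (Suc i) m y)) + norm (e i n)"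
    by (rule norm_triangle_ineq)
  also have "\<dots> \<le> norm (pert_comp T e n (Suc i) m y - comp_range T n (Suc i) m y) + norm (e i n)"
    using ne unfolding nonexpansive_def by simp
  also have "\<dots> \<le> (\<Sum>k=i..m. norm (e k n))"
    using IH im by (simp add: sum.atLeast_Suc_atMost)
  finally show ?case .
qed

definition residual_diff :: "(nat \<Rightarrow> nat \<Rightarrow> 'a \<Rightarrow> 'a::real_vector) \<Rightarrow> nat \<Rightarrow> nat \<Rightarrow> nat \<Rightarrow> 'a \<Rightarrow> 'a \<Rightarrow> 'a" where
  "residual_diff T n m k x y = (comp_range T n (Suc k) m x - T k n (comp_range T n (Suc k) m x))
       - (comp_range T n (Suc k) m y - T k n (comp_range T n (Suc k) m y))"

lemma sum_residual_diff:
  assumes "i \<le> Suc m"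
  shows "(\<Sum>k=i..m. residual_diff T n m k x y) = (x - comp_range T n i m x) - (y - comp_range T n i m y)"
  using assms
proof (induction "Suc m - i" arbitrary: i)
  case 0 then have "i = Suc m" by simp
  then show ?case by (simp add: comp_range_empty)
next
  case (Suc d)
  then have im: "i \<le> m" by simp
  have IH: "(\<Sum>k=Suc i..m. residual_diff T n m k x y) = (x - comp_range T n (Suc i) m x) - (y - comp_range T n (Suc i) m y)"
    using Suc by simp
  show ?case using IH im unfolding sum.atLeast_Suc_atMost[OF im] comp_range_first[OF im] residual_diff_def
    by (simp add: algebra_simps)
qed

lemma sum_residual_diff_le:
  fixes T :: "nat \<Rightarrow> nat \<Rightarrow> 'a::real_inner \<Rightarrow> 'a"
  assumes "\<And>k. k \<in> {i..m} \<Longrightarrow> averaged (\<alpha> k) (T k n)" and "i \<le> Suc m"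
  shows "(\<Sum>k=i..m. (1 - \<alpha> k) / \<alpha> k * (norm (residual_diff T n m k x y))\<^sup>2)
     \<le> (norm (x - y))\<^sup>2 - (norm (comp_range T n i m x - comp_range T n i m y))\<^sup>2"
  using assms
proof (induction "Suc m - i" arbitrary: i)
  case 0 then have "i = Suc m" by simp
  then show ?case by (simp add: comp_range_empty)
next
  case (Suc d)
  then have im: "i \<le> m" by simp
  have IH: "(\<Sum>k=Suc i..m. (1 - \<alpha> k) / \<alpha> k * (norm (residual_diff T n m k x y))\<^sup>2)
     \<le> (norm (x - y))\<^sup>2 - (norm (comp_range T n (Suc i) m x - comp_range T n (Suc i) m y))\<^sup>2"
    using Suc by simp
  have av: "averaged (\<alpha> i) (T i n)" using Suc.prems im by simp
  have "(norm (comp_range T n i m x - comp_range T n i m y))\<^sup>2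
     \<le> (norm (comp_range T n (Suc i) m x - comp_range T n (Suc i) m y))\<^sup>2 - (1 - \<alpha> i) / \<alpha> i * (norm (residual_diff T n m i x y))\<^sup>2"
    unfolding comp_range_first[OF im] residual_diff_def comp_apply by (rule averaged_norm_square_le[OF av])
  then show ?case using IH im unfolding sum.atLeast_Suc_atMost[OF im] by simp
qed

lemma norm_sum_square_le_weighted:
  fixes d :: "nat \<Rightarrow> 'a::real_inner"
  assumes kp: "\<And>k. k \<in> I \<Longrightarrow> 0 < \<kappa> k"
  shows "(norm (\<Sum>k\<in>I. d k))\<^sup>2 \<le> (\<Sum>k\<in>I. 1 / \<kappa> k) * (\<Sum>k\<in>I. \<kappa> k * (norm (d k))\<^sup>2)"
proof -
  have "norm (\<Sum>k\<in>I. d k) \<le> (\<Sum>k\<in>I. norm (d k))" by (rule norm_sum)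
  then have "(norm (\<Sum>k\<in>I. d k))\<^sup>2 \<le> (\<Sum>k\<in>I. norm (d k))\<^sup>2" by (intro power_mono) auto
  also have "(\<Sum>k\<in>I. norm (d k)) = (\<Sum>k\<in>I. (1 / sqrt (\<kappa> k)) * (sqrt (\<kappa> k) * norm (d k)))"
  proof (intro sum.cong refl)
    fix k assume "k \<in> I"
    then have "sqrt (\<kappa> k) > 0" using kp by simp
    then show "norm (d k) = 1 / sqrt (\<kappa> k) * (sqrt (\<kappa> k) * norm (d k))" by (simp add: field_simps)
  qed
  also have "(\<dots>)\<^sup>2 \<le> (\<Sum>k\<in>I. (1 / sqrt (\<kappa> k))\<^sup>2) * (\<Sum>k\<in>I. (sqrt (\<kappa> k) * norm (d k))\<^sup>2)"
    by (rule Cauchy_Schwarz_ineq_sum)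
  also have "\<dots> = (\<Sum>k\<in>I. 1 / \<kappa> k) * (\<Sum>k\<in>I. \<kappa> k * (norm (d k))\<^sup>2)"
    using kp by (intro arg_cong2[where f="(*)"] sum.cong) (auto simp: power_divide power_mult_distrib less_imp_le)
  finally show ?thesis .
qed

lemma norm_relaxation_square:
  fixes x q z :: "'a::real_inner"
  shows "(norm (x + lam *\<^sub>R (q - x) - z))\<^sup>2
    = (1 - lam) * (norm (x - z))\<^sup>2 + lam * (norm (q - z))\<^sup>2 - lam * (1 - lam) * (norm (q - x))\<^sup>2"
proof -
  have convex: "(norm ((1 - lam) *\<^sub>R a + lam *\<^sub>R b))\<^sup>2
      = (1 - lam) * (norm a)\<^sup>2 + lam * (norm b)\<^sup>2 - lam * (1 - lam) * (norm (b - a))\<^sup>2" for a b :: 'a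
    unfolding norm_add_square norm_scaleR_square norm_diff_square
    by (simp add: algebra_simps power2_eq_square inner_commute)
  have "x + lam *\<^sub>R (q - x) - z = (1 - lam) *\<^sub>R (x - z) + lam *\<^sub>R (q - z)"
    by (simp add: algebra_simps)
  moreover have "q - x = (q - z) - (x - z)" by simp
  ultimately show ?thesis using convex[of "x - z" "q - z"] by (simp only:)
qed

text \<open>The one-step estimate, with \<open>A = \<parallel>x\<^sub>n - z\<parallel>\<^sup>2\<close>, \<open>B = \<parallel>T x\<^sub>n - z\<parallel>\<^sup>2\<close>,
  \<open>D = \<parallel>T x\<^sub>n - x\<^sub>n\<parallel>\<^sup>2\<close> and \<open>Sg\<close> the weighted sum of squared residual differences; half of the
  margin \<open>\<epsilon>\<close> left by the bound on \<open>lam\<close> is spent on \<open>D\<close>, the other half on \<open>Sg\<close>.\<close>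
lemma relaxed_step_bound:
  fixes A B D Sg K lam \<epsilon> :: real
  assumes h1: "Sg \<le> A - B" and h2: "D \<le> K * Sg" and K0: "0 < K" and l0: "0 < lam"
    and l1: "lam \<le> 1 + (1 - \<epsilon>) / K" and e1: "\<epsilon> < 1" and D0: "0 \<le> D"
  shows "(1 - lam) * A + lam * B - lam * (1 - lam) * D
      \<le> A - (1/2) * lam * (1 + 1/K - lam) * D - (\<epsilon>/2) * lam * Sg"
proof -
  have sd: "D / K \<le> Sg" using h2 K0 by (simp add: divide_le_eq mult.commute)
  have "(1 - \<epsilon>/2) * (D / K) \<le> (1 - \<epsilon>/2) * Sg" using sd e1 by (intro mult_left_mono) auto
  moreover have "(1 - \<epsilon>/2) * (D / K) + (1/2) * (1 - lam - 1/K) * D = (D/2) * ((1 - \<epsilon>)/K + 1 - lam)"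
    using K0 by (simp add: field_simps)
  moreover have "0 \<le> (D/2) * ((1 - \<epsilon>)/K + 1 - lam)" using D0 l1 by simp
  ultimately have h: "0 \<le> (1 - \<epsilon>/2) * Sg + (1/2) * (1 - lam - 1/K) * D" by linarith
  have "A - (1/2) * lam * (1 + 1/K - lam) * D - (\<epsilon>/2) * lam * Sg - ((1 - lam) * A + lam * B - lam * (1 - lam) * D)
      = lam * ((A - B) - (\<epsilon>/2) * Sg + (1/2) * (1 - lam - 1/K) * D)"
    using K0 by (simp add: field_simps)
  also have "\<dots> \<ge> lam * ((1 - \<epsilon>/2) * Sg + (1/2) * (1 - lam - 1/K) * D)"
    using h1 l0 by (intro mult_left_mono) (auto simp: algebra_simps)
  moreover have "lam * ((1 - \<epsilon>/2) * Sg + (1/2) * (1 - lam - 1/K) * D) \<ge> 0" using l0 h by simp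
  ultimately show ?thesis by linarith
qed

subsection \<open>The perturbed relaxed composition scheme\<close>

text \<open>Weaker hypotheses than in the theorem: \<open>\<epsilon> < 1\<close> and \<open>1 \<le> m\<close> suffice, and
  \<open>0 < \<alpha> i n < 1\<close> is part of \<open>averaged\<close>.\<close>
locale relaxed_composition_iteration =
  fixes \<epsilon> :: real and m :: nat and \<alpha> :: "nat \<Rightarrow> nat \<Rightarrow> real"
    and T :: "nat \<Rightarrow> nat \<Rightarrow> 'a::{real_inner,complete_space} \<Rightarrow> 'a"
    and e :: "nat \<Rightarrow> nat \<Rightarrow> 'a" and lam :: "nat \<Rightarrow> real" and x :: "nat \<Rightarrow> 'a" and S :: "'a set"
  assumes eps: "0 < \<epsilon>" "\<epsilon> < 1"
    and m_pos: "1 \<le> m"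
    and avg: "\<And>i n. i \<in> {1..m} \<Longrightarrow> averaged (\<alpha> i n) (T i n)"
    and lam: "\<And>n. 0 < lam n \<and>
        lam n \<le> (1 - \<epsilon>) * (1 + \<epsilon> * phi m (\<lambda>i. \<alpha> i n)) / phi m (\<lambda>i. \<alpha> i n)"
    and iter: "\<And>n. x (Suc n) = x n + lam n *\<^sub>R (pert_comp T e n 1 m (x n) - x n)"
    and S_def: "S = (\<Inter>n. Fix (comp_range T n 1 m))"
    and S_ne: "S \<noteq> {}"
    and err: "\<And>i. i \<in> {1..m} \<Longrightarrow> summable (\<lambda>n. lam n * norm (e i n))"
begin

definition K :: "nat \<Rightarrow> real" where
  "K n = (\<Sum>i=1..m. \<alpha> i n / (1 - \<alpha> i n))"

definition err_bound :: "nat \<Rightarrow> real" where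
  "err_bound n = (\<Sum>i=1..m. lam n * norm (e i n))"

definition residual_sum :: "'a \<Rightarrow> nat \<Rightarrow> real" where
  "residual_sum z n = (\<Sum>k=1..m. (1 - \<alpha> k n) / \<alpha> k n * (norm (residual_diff T n m k (x n) z))\<^sup>2)"

definition fix_residual :: "nat \<Rightarrow> real" where
  "fix_residual n = (norm (comp_range T n 1 m (x n) - x n))\<^sup>2"

definition decrease :: "'a \<Rightarrow> nat \<Rightarrow> real" where
  "decrease z n = 1/2 * lam n * (1 + 1 / K n - lam n) * fix_residual n + \<epsilon>/2 * lam n * residual_sum z n"

lemma alpha: "i \<in> {1..m} \<Longrightarrow> 0 < \<alpha> i n \<and> \<alpha> i n < 1"
  using avg unfolding averaged_def by blast

lemma weight_pos: "i \<in> {1..m} \<Longrightarrow> 0 < (1 - \<alpha> i n) / \<alpha> i n"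
  using alpha by simp

lemma K_pos: "0 < K n"
  unfolding K_def using m_pos alpha by (intro sum_pos) auto

lemma inverse_phi: "1 / phi m (\<lambda>i. \<alpha> i n) = 1 + 1 / K n"
  unfolding phi_def K_def by simp

lemma lam_le: "lam n \<le> 1 + (1 - \<epsilon>) / K n"
proof -
  define p where "p = phi m (\<lambda>i. \<alpha> i n)"
  have p: "1 / p = 1 + 1 / K n" unfolding p_def by (rule inverse_phi)
  moreover have "0 < 1 + 1 / K n" using K_pos[of n] by (intro add_pos_pos) auto
  ultimately have "p \<noteq> 0" by auto
  have "lam n \<le> (1 - \<epsilon>) * (1 + \<epsilon> * p) / p" using lam[of n] unfolding p_def by simp
  also have "\<dots> = (1 - \<epsilon>) * (1 / p + \<epsilon>)" using \<open>p \<noteq> 0\<close> by (simp add: field_simps)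
  also have "\<dots> = (1 - \<epsilon>) * (1 + \<epsilon>) + (1 - \<epsilon>) / K n" unfolding p by (simp add: algebra_simps)
  also have "\<dots> \<le> 1 + (1 - \<epsilon>) / K n" by (simp add: algebra_simps)
  finally show ?thesis .
qed

lemma relaxation_margin_nonneg: "0 \<le> 1 + 1 / K n - lam n"
proof -
  have "(1 - \<epsilon>) / K n \<le> 1 / K n" using eps K_pos[of n] by (simp add: divide_right_mono)
  then show ?thesis using lam_le[of n] by linarith
qed

lemma residual_sum_nonneg: "0 \<le> residual_sum z n"
  unfolding residual_sum_def using weight_pos by (intro sum_nonneg mult_nonneg_nonneg) (auto intro: less_imp_le)

lemma decrease_nonneg: "0 \<le> decrease z n"
  unfolding decrease_def fix_residual_def
  using lam[of n] relaxation_margin_nonneg[of n] residual_sum_nonneg[of z n] eps by simp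

lemma fixed_point: "z \<in> S \<Longrightarrow> comp_range T n 1 m z = z"
  unfolding S_def Fix_def by auto

lemma nonexpansive_T: "k \<in> {1..m} \<Longrightarrow> nonexpansive (T k n)"
  using avg unfolding averaged_def by blast

lemma S_closed: "closed S"
proof -
  have "continuous_on UNIV (comp_range T n 1 m)" for n
    using nonexpansive_comp_range[of 1 m T n] nonexpansive_T m_pos unfolding nonexpansive_def
    by (intro lipschitz_on_continuous_on[where L=1] lipschitz_onI) (auto simp: dist_norm)
  then have "closed (Fix (comp_range T n 1 m))" for n
    unfolding Fix_def by (intro closed_Collect_eq) (auto intro: continuous_on_id)
  then show ?thesis unfolding S_def by auto
qed

lemma residual_sum_le:
  assumes "z \<in> S"
  shows "residual_sum z n \<le> (norm (x n - z))\<^sup>2 - (norm (comp_range T n 1 m (x n) - z))\<^sup>2"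
  using sum_residual_diff_le[of 1 m "\<lambda>k. \<alpha> k n" T n "x n" z] avg m_pos fixed_point[OF assms, of n]
  unfolding residual_sum_def by simp

text \<open>The residuals telescope to \<open>x n - comp_range T n 1 m (x n)\<close>, and the weighted
  Cauchy--Schwarz inequality with weights \<open>(1 - \<alpha> k n) / \<alpha> k n\<close> produces the factor \<open>K n\<close>.\<close>
lemma fix_residual_le:
  assumes "z \<in> S"
  shows "fix_residual n \<le> K n * residual_sum z n"
proof -
  have "(\<Sum>k=1..m. residual_diff T n m k (x n) z) = x n - comp_range T n 1 m (x n)"
    using sum_residual_diff[of 1 m T n "x n" z] m_pos fixed_point[OF assms, of n] by simp
  moreover have "(\<Sum>k=1..m. 1 / ((1 - \<alpha> k n) / \<alpha> k n)) = K n" unfolding K_def by simp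
  ultimately show ?thesis
    using norm_sum_square_le_weighted[of "{1..m}" "\<lambda>k. (1 - \<alpha> k n) / \<alpha> k n"
        "\<lambda>k. residual_diff T n m k (x n) z"] weight_pos
    unfolding fix_residual_def residual_sum_def by (simp add: norm_minus_commute)
qed

lemma exact_step_decrease:
  assumes "z \<in> S"
  shows "(norm (x n + lam n *\<^sub>R (comp_range T n 1 m (x n) - x n) - z))\<^sup>2
    \<le> (norm (x n - z))\<^sup>2 - decrease z n"
proof -
  have "(norm (x n + lam n *\<^sub>R (comp_range T n 1 m (x n) - x n) - z))\<^sup>2
      = (1 - lam n) * (norm (x n - z))\<^sup>2 + lam n * (norm (comp_range T n 1 m (x n) - z))\<^sup>2
        - lam n * (1 - lam n) * fix_residual n"
    unfolding fix_residual_def by (rule norm_relaxation_square)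
  also have "\<dots> \<le> (norm (x n - z))\<^sup>2 - 1/2 * lam n * (1 + 1 / K n - lam n) * fix_residual n
      - \<epsilon>/2 * lam n * residual_sum z n"
    by (rule relaxed_step_bound[OF residual_sum_le[OF assms] fix_residual_le[OF assms] K_pos _ lam_le])
      (use lam[of n] eps in \<open>auto simp: fix_residual_def\<close>)
  finally show ?thesis unfolding decrease_def by simp
qed

lemma dist_step_le:
  "norm (x (Suc n) - z) \<le> norm (x n + lam n *\<^sub>R (comp_range T n 1 m (x n) - x n) - z) + err_bound n"
proof -
  define y where "y = x n + lam n *\<^sub>R (comp_range T n 1 m (x n) - x n)"
  define d where "d = pert_comp T e n 1 m (x n) - comp_range T n 1 m (x n)"
  have "norm d \<le> (\<Sum>k=1..m. norm (e k n))"
    unfolding d_def using nonexpansive_T m_pos by (intro norm_pert_comp_diff_le) auto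
  then have "lam n * norm d \<le> lam n * (\<Sum>k=1..m. norm (e k n))"
    using lam[of n] by (intro mult_left_mono) auto
  then have "norm (lam n *\<^sub>R d) \<le> err_bound n"
    using lam[of n] unfolding err_bound_def by (simp add: sum_distrib_left)
  moreover have "x (Suc n) - z = (y - z) + lam n *\<^sub>R d"
    unfolding iter y_def d_def by (simp add: algebra_simps)
  then have "norm (x (Suc n) - z) \<le> norm (y - z) + norm (lam n *\<^sub>R d)"
    by (simp only: norm_triangle_ineq)
  ultimately show ?thesis unfolding y_def by linarith
qed

lemma exact_step_le:
  assumes "z \<in> S"
  shows "norm (x n + lam n *\<^sub>R (comp_range T n 1 m (x n) - x n) - z) \<le> norm (x n - z)"
proof (rule power2_le_imp_le)
  show "(norm (x n + lam n *\<^sub>R (comp_range T n 1 m (x n) - x n) - z))\<^sup>2 \<le> (norm (x n - z))\<^sup>2"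
    using exact_step_decrease[OF assms, of n] decrease_nonneg[of z n] by linarith
qed simp

sublocale quasi_fejer S err_bound x
proof
  show "0 \<le> err_bound n" for n
    unfolding err_bound_def using lam[of n] by (intro sum_nonneg mult_nonneg_nonneg) auto
  show "summable err_bound" unfolding err_bound_def using err by (intro summable_sum) auto
  show "norm (x (Suc n) - z) \<le> norm (x n - z) + err_bound n" if "z \<in> S" for z n
    using exact_step_le[OF that, of n] dist_step_le[of n z] by linarith
qed (rule S_ne)

lemma summable_decrease:
  assumes z: "z \<in> S"
  shows "summable (decrease z)"
proof -
  define B where "B = norm (x 0 - z) + suminf err_bound"
  define y where "y n = x n + lam n *\<^sub>R (comp_range T n 1 m (x n) - x n)" for n
  have B: "0 \<le> B" unfolding B_def using suminf_nonneg[OF c_summable c_nonneg] by simp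
  have y: "norm (y n - z) \<le> norm (x n - z)" for n
    unfolding y_def by (rule exact_step_le[OF z])
  show ?thesis
  proof (rule summable_quasi_fejer_decrement[where a="\<lambda>n. (norm (x n - z))\<^sup>2"
        and c="\<lambda>n. err_bound n * (2 * B + suminf err_bound)"])
    fix n
    have "(norm (x (Suc n) - z))\<^sup>2 \<le> (norm (y n - z))\<^sup>2 + err_bound n * (2 * B + suminf err_bound)"
      using dist_step_le[of n z] y[of n] dist_bounded[OF z, of n] c_nonneg[of n] c_le_suminf[of n]
      unfolding y_def B_def by (intro square_le_square_add) auto
    then show "(norm (x (Suc n) - z))\<^sup>2
        \<le> (norm (x n - z))\<^sup>2 - decrease z n + err_bound n * (2 * B + suminf err_bound)"
      using exact_step_decrease[OF z, of n] unfolding y_def by linarith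
    show "0 \<le> err_bound n * (2 * B + suminf err_bound)"
      using c_nonneg[of n] B suminf_nonneg[OF c_summable c_nonneg] by simp
  next
    show "summable (\<lambda>n. err_bound n * (2 * B + suminf err_bound))"
      using c_summable by (rule summable_mult2)
  qed (simp_all add: decrease_nonneg)
qed

lemma summable_fix_residual:
  "summable (\<lambda>n. lam n * (1 / phi m (\<lambda>i. \<alpha> i n) - lam n) * (norm (comp_range T n 1 m (x n) - x n))\<^sup>2)"
proof -
  obtain z where z: "z \<in> S" using S_ne by blast
  show ?thesis
  proof (rule summable_comparison_test'[where N=0])
    show "summable (\<lambda>n. 2 * decrease z n)" using summable_decrease[OF z] by (rule summable_mult)
    show "norm (lam n * (1 / phi m (\<lambda>i. \<alpha> i n) - lam n) * (norm (comp_range T n 1 m (x n) - x n))\<^sup>2)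
        \<le> 2 * decrease z n" for n
      using lam[of n] relaxation_margin_nonneg[of n] residual_sum_nonneg[of z n] eps
      unfolding inverse_phi decrease_def fix_residual_def by simp
  qed
qed

lemma summable_residual_diff:
  assumes z: "z \<in> S" and i: "i \<in> {1..m}"
  shows "summable (\<lambda>n. lam n * (1 - \<alpha> i n) / \<alpha> i n * (norm (residual_diff T n m i (x n) z))\<^sup>2)"
proof (rule summable_comparison_test'[where N=0])
  show "summable (\<lambda>n. 2 / \<epsilon> * decrease z n)" using summable_decrease[OF z] by (rule summable_mult)
  fix n
  define r where "r = (1 - \<alpha> i n) / \<alpha> i n * (norm (residual_diff T n m i (x n) z))\<^sup>2"
  have r: "0 \<le> r" unfolding r_def using weight_pos[OF i, of n] by (intro mult_nonneg_nonneg) auto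
  have "r \<le> residual_sum z n"
    unfolding residual_sum_def r_def using i weight_pos
    by (intro member_le_sum mult_nonneg_nonneg) (auto intro: less_imp_le)
  then have "lam n * r \<le> lam n * residual_sum z n"
    using lam[of n] by (intro mult_left_mono) auto
  also have "\<dots> \<le> 2 / \<epsilon> * decrease z n"
  proof -
    have "2 / \<epsilon> * decrease z n
        = lam n * (1 + 1 / K n - lam n) * fix_residual n / \<epsilon> + lam n * residual_sum z n"
      unfolding decrease_def using eps by (simp add: field_simps)
    moreover have "0 \<le> lam n * (1 + 1 / K n - lam n) * fix_residual n / \<epsilon>"
      using lam[of n] relaxation_margin_nonneg[of n] eps unfolding fix_residual_def by simp
    ultimately show ?thesis by linarith
  qed
  finally have "lam n * r \<le> 2 / \<epsilon> * decrease z n" .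
  moreover have "lam n * (1 - \<alpha> i n) / \<alpha> i n * (norm (residual_diff T n m i (x n) z))\<^sup>2 = lam n * r"
    unfolding r_def by simp
  moreover have "0 \<le> lam n * r" using lam[of n] r by simp
  ultimately show "norm (lam n * (1 - \<alpha> i n) / \<alpha> i n * (norm (residual_diff T n m i (x n) z))\<^sup>2)
      \<le> 2 / \<epsilon> * decrease z n"
    by (metis abs_of_nonneg real_norm_def)
qed

end

theorem theorem3p5:
  fixes \<epsilon> :: real and m :: nat and x0 :: "'a::{real_inner, complete_space}"
    and \<alpha> :: "nat \<Rightarrow> nat \<Rightarrow> real"
    and T :: "nat \<Rightarrow> nat \<Rightarrow> 'a \<Rightarrow> 'a"
    and e :: "nat \<Rightarrow> nat \<Rightarrow> 'a"
    and lam :: "nat \<Rightarrow> real"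
    and x :: "nat \<Rightarrow> 'a"
    and S :: "'a set"
  assumes eps: "0 < \<epsilon>" "\<epsilon> < 1/2"
    and m2: "m \<ge> 2"
    and alpha: "\<And>i n. i \<in> {1..m} \<Longrightarrow> 0 < \<alpha> i n \<and> \<alpha> i n < 1"
    and avg: "\<And>i n. i \<in> {1..m} \<Longrightarrow> averaged (\<alpha> i n) (T i n)"
    and lam: "\<And>n. 0 < lam n \<and>
        lam n \<le> (1 - \<epsilon>) * (1 + \<epsilon> * phi m (\<lambda>i. \<alpha> i n)) / phi m (\<lambda>i. \<alpha> i n)"
    and x_0: "x 0 = x0"
    and iter: "\<And>n. x (Suc n) = x n + lam n *\<^sub>R (pert_comp T e n 1 m (x n) - x n)"
    and S_def: "S = (\<Inter>n. Fix (comp_range T n 1 m))"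
    and S_ne: "S \<noteq> {}"
    and err: "\<And>i. i \<in> {1..m} \<Longrightarrow> summable (\<lambda>n. lam n * norm (e i n))"
  shows
    "(summable (\<lambda>n. lam n * (1 / phi m (\<lambda>i. \<alpha> i n) - lam n)
        * (norm (comp_range T n 1 m (x n) - x n))\<^sup>2))
   \<and> (\<forall>z\<in>S. \<forall>i\<in>{1..m}. summable (\<lambda>n. lam n * (1 - \<alpha> i n) / \<alpha> i n
        * (norm ((comp_range T n (Suc i) m (x n) - T i n (comp_range T n (Suc i) m (x n)))
               - (comp_range T n (Suc i) m z - T i n (comp_range T n (Suc i) m z))))\<^sup>2))
   \<and> ((\<exists>z\<in>S. weakly_conv x z) \<longleftrightarrow> (\<forall>z. weak_seq_cluster x z \<longrightarrow> z \<in> S))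
   \<and> ((\<exists>z\<in>S. weakly_conv x z) \<and> interior S \<noteq> {} \<longrightarrow> (\<exists>z\<in>S. x \<longlonglongrightarrow> z))
   \<and> ((\<exists>z\<in>S. x \<longlonglongrightarrow> z) \<longleftrightarrow> liminf (\<lambda>n. ereal (infdist (x n) S)) = 0)"
proof -
  interpret relaxed_composition_iteration \<epsilon> m \<alpha> T e lam x S
    using eps m2 avg lam iter S_def S_ne err by unfold_locales auto
  show ?thesis
  proof (intro conjI ballI impI)
    show "summable (\<lambda>n. lam n * (1 / phi m (\<lambda>i. \<alpha> i n) - lam n)
        * (norm (comp_range T n 1 m (x n) - x n))\<^sup>2)"
      by (rule summable_fix_residual)
    show "summable (\<lambda>n. lam n * (1 - \<alpha> i n) / \<alpha> i n
        * (norm ((comp_range T n (Suc i) m (x n) - T i n (comp_range T n (Suc i) m (x n)))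
               - (comp_range T n (Suc i) m z - T i n (comp_range T n (Suc i) m z))))\<^sup>2)"
      if "z \<in> S" "i \<in> {1..m}" for z i
      using summable_residual_diff[OF that] unfolding residual_diff_def .
    show "(\<exists>z\<in>S. weakly_conv x z) \<longleftrightarrow> (\<forall>z. weak_seq_cluster x z \<longrightarrow> z \<in> S)"
      by (rule weakly_conv_iff_weak_seq_clusters)
    show "\<exists>z\<in>S. x \<longlonglongrightarrow> z" if "(\<exists>z\<in>S. weakly_conv x z) \<and> interior S \<noteq> {}"
      using that tendsto_if_interior_nonempty by blast
    show "(\<exists>z\<in>S. x \<longlonglongrightarrow> z) \<longleftrightarrow> liminf (\<lambda>n. ereal (infdist (x n) S)) = 0"
      using S_closed by (rule tendsto_iff_liminf_infdist)
  qed
qed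

end
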